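(* Suppose there exists a $\pi_p$-contracting element $\xi\in G$. Then $B^1(G,\pi_p)$ is closed in $Z^1(G,\pi_p)$, i.e. $H^1_{\mathrm{ct}}(G,\pi_p)=\overline H^1_{\mathrm{ct}}(G,\pi_p)$ is Hausdorff.
   Context: $G$ is a locally compact second countable group with left Haar measure $\mu$; $(\pi_0,V)$ is a continuous representation of $G$ on a separable Banach space $V$; for $p>1$, $\pi_p$ is the representation of $G$ on the Bochner space $L^p(G,V)$ given by $(\pi(g)f)(h)=\pi_0(g)(f(hg))$. $Z^1(G,\pi_p)$ is the space of continuous maps $b:G\to L^p(G,V)$ with $b(gh)=b(g)+\pi(g)b(h)$, with the topology of uniform convergence on compacta; $B^1(G,\pi_p)=\{g\mapsto f-\pi(g)f: f\in L^p(G,V)\}$; $\overline H^1_{\mathrm{ct}}$ is the quotient by the closure of $B^1$. An element $\xi$ is $\pi_p$-contracting if $\lim_{n\to\infty}|||\pi(\xi^n)|||_{L^p(G,V)}=0$. *)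

theory Defs
  imports "HOL-Analysis.Analysis"
begin

text \<open>The locally compact second countable group G is written additively (the class
group_add does NOT require commutativity). Haar measure: a Borel measure on G that
is left invariant, finite on compact sets and positive on nonempty open sets
(in a second countable locally compact Hausdorff space such a measure is automatically regular).\<close>

definition left_haar_measure :: "'g::{topological_group_add} measure \<Rightarrow> bool" where
  "left_haar_measure M \<longleftrightarrow>
     sets M = sets borel \<and> space M = UNIV \<and>
     (\<forall>g A. A \<in> sets borel \<longrightarrow> emeasure M ((+) g ` A) = emeasure M A) \<and>
     (\<forall>K. compact K \<longrightarrow> emeasure M K < \<infinity>) \<and>
     (\<forall>U. open U \<and> U \<noteq> {} \<longrightarrow> emeasure M U > 0)"

definition continuous_rep :: "('g::topological_group_add \<Rightarrow> ('v::banach \<Rightarrow>\<^sub>L 'v)) \<Rightarrow> bool" where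
  "continuous_rep \<pi>0 \<longleftrightarrow>
     \<pi>0 0 = id_blinfun \<and>
     (\<forall>g h. \<pi>0 (g + h) = \<pi>0 g o\<^sub>L \<pi>0 h) \<and>
     (\<forall>v. continuous_on UNIV (\<lambda>g. blinfun_apply (\<pi>0 g) v))"

text \<open>Bochner space L^p(G,V): strongly (= Borel, V separable) measurable functions with
integrable p-th power of the norm; elements are handled via representatives, with
equality in L^p meaning equality almost everywhere.\<close>
definition memLp :: "'a measure \<Rightarrow> real \<Rightarrow> ('a \<Rightarrow> 'v::banach) \<Rightarrow> bool" where
  "memLp M p f \<longleftrightarrow> f \<in> borel_measurable M \<and> integrable M (\<lambda>x. norm (f x) powr p)"

definition Lp_norm :: "'a measure \<Rightarrow> real \<Rightarrow> ('a \<Rightarrow> 'v::banach) \<Rightarrow> real" where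
  "Lp_norm M p f = (\<integral>x. norm (f x) powr p \<partial>M) powr (1 / p)"

definition pi_p :: "('g::group_add \<Rightarrow> ('v::banach \<Rightarrow>\<^sub>L 'v)) \<Rightarrow> 'g \<Rightarrow> ('g \<Rightarrow> 'v) \<Rightarrow> ('g \<Rightarrow> 'v)" where
  "pi_p \<pi>0 g f = (\<lambda>h. blinfun_apply (\<pi>0 g) (f (h + g)))"

text \<open>Operator norm of an operator on L^p (in ennreal, so no junk values).\<close>
definition Lp_opnorm :: "'a measure \<Rightarrow> real \<Rightarrow> (('a \<Rightarrow> 'v::banach) \<Rightarrow> ('a \<Rightarrow> 'v)) \<Rightarrow> ennreal" where
  "Lp_opnorm M p T = (SUP f\<in>{f. memLp M p f \<and> Lp_norm M p f \<le> 1}. ennreal (Lp_norm M p (T f)))"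

definition gpow :: "'g::group_add \<Rightarrow> nat \<Rightarrow> 'g" where
  "gpow \<xi> n = ((+) \<xi> ^^ n) 0"

definition pi_p_contracting :: "'g::topological_group_add measure \<Rightarrow> real \<Rightarrow> ('g \<Rightarrow> ('v::banach \<Rightarrow>\<^sub>L 'v)) \<Rightarrow> 'g \<Rightarrow> bool" where
  "pi_p_contracting M p \<pi>0 \<xi> \<longleftrightarrow> (\<lambda>n. Lp_opnorm M p (pi_p \<pi>0 (gpow \<xi> n))) \<longlonglongrightarrow> 0"

definition cocycle :: "'g::topological_group_add measure \<Rightarrow> real \<Rightarrow> ('g \<Rightarrow> ('v::banach \<Rightarrow>\<^sub>L 'v)) \<Rightarrow> ('g \<Rightarrow> 'g \<Rightarrow> 'v) \<Rightarrow> bool" where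
  "cocycle M p \<pi>0 b \<longleftrightarrow>
     (\<forall>g. memLp M p (b g)) \<and>
     (\<forall>g. ((\<lambda>h. Lp_norm M p (\<lambda>x. b h x - b g x)) \<longlongrightarrow> 0) (at g)) \<and>
     (\<forall>g h. AE x in M. b (g + h) x = b g x + pi_p \<pi>0 g (b h) x)"

definition coboundary :: "'g::topological_group_add measure \<Rightarrow> real \<Rightarrow> ('g \<Rightarrow> ('v::banach \<Rightarrow>\<^sub>L 'v)) \<Rightarrow> ('g \<Rightarrow> 'g \<Rightarrow> 'v) \<Rightarrow> bool" where
  "coboundary M p \<pi>0 b \<longleftrightarrow>
     (\<exists>f. memLp M p f \<and> (\<forall>g. AE x in M. b g x = f x - pi_p \<pi>0 g f x))"

definition in_closure_B1 :: "'g::topological_group_add measure \<Rightarrow> real \<Rightarrow> ('g \<Rightarrow> ('v::banach \<Rightarrow>\<^sub>L 'v)) \<Rightarrow> ('g \<Rightarrow> 'g \<Rightarrow> 'v) \<Rightarrow> bool" where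
  "in_closure_B1 M p \<pi>0 b \<longleftrightarrow>
     (\<forall>K. compact K \<longrightarrow> (\<forall>\<epsilon>>0. \<exists>f. memLp M p f \<and>
        (\<forall>g\<in>K. Lp_norm M p (\<lambda>x. b g x - (f x - pi_p \<pi>0 g f x)) < \<epsilon>)))"

end

theory Submission
  imports Defs
begin

text \<open>Choose \<open>t = \<xi>^n\<close> with \<open>\<parallel>\<pi>\<^sub>p(t)\<parallel> \<le> 1/4\<close>. A Neumann series solves
  \<open>f - \<pi>\<^sub>p(t) f = b(t)\<close>. If \<open>u\<close> approximates \<open>b\<close> on \<open>{g, t}\<close> by its coboundary, then
  \<open>e = u - f\<close> has a small coboundary at \<open>t\<close>, so \<open>e\<close> itself is small because \<open>\<pi>\<^sub>p(t)\<close>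
  contracts. Right translations act boundedly on \<open>L\<^sup>p\<close> (the right translate of a left Haar
  measure is a constant multiple of it), hence the coboundary of \<open>e\<close> at \<open>g\<close> is small as well,
  and \<open>b(g) - (f - \<pi>\<^sub>p(g) f)\<close> is arbitrarily small, i.e. zero. Only \<open>b(g) \<in> L\<^sup>p\<close> is used,
  neither the cocycle identity nor the continuity of \<open>\<pi>\<^sub>0\<close>.

  Instead of the \<open>L\<^sup>p\<close> norm we work with \<open>\<integral>\<parallel>f\<parallel>\<^sup>p\<close>, which satisfies the triangle inequality
  up to the factor \<open>2\<^sup>p\<close>; the contraction bound \<open>1/4\<close> makes \<open>2\<^sup>p (1/4)\<^sup>p \<le> 1/2\<close>, so this
  factor can be absorbed.\<close>

lemma borel_measurable_continuous_compose:
  assumes "continuous_on UNIV \<phi>" and "a \<in> borel_measurable borel"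
  shows "(\<lambda>x. a (\<phi> x)) \<in> borel_measurable borel"
  using measurable_compose[OF borel_measurable_continuous_onI[OF assms(1)] assms(2)] .

lemma sigma_finite_if_finite_on_compacts:
  fixes N :: "'a::{t2_space, second_countable_topology} measure"
  assumes lc: "locally_compact_space (euclidean :: 'a topology)"
    and sets_N: "sets N = sets borel" and space_N: "space N = UNIV"
    and finite_N: "\<And>K. compact K \<Longrightarrow> emeasure N K < \<infinity>"
  shows "sigma_finite_measure N"
proof
  have "\<forall>x::'a. \<exists>U K. open U \<and> compact K \<and> x \<in> U \<and> U \<subseteq> K"
    using lc unfolding locally_compact_space_def by (simp add: compactin_euclidean_iff)
  then have "\<exists>U. \<forall>x::'a. \<exists>K. open (U x) \<and> compact K \<and> x \<in> U x \<and> U x \<subseteq> K"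
    by (rule choice)
  then obtain U where "\<forall>x::'a. \<exists>K. open (U x) \<and> compact K \<and> x \<in> U x \<and> U x \<subseteq> K"
    by blast
  then have "\<exists>K. \<forall>x::'a. open (U x) \<and> compact (K x) \<and> x \<in> U x \<and> U x \<subseteq> K x"
    by (rule choice)
  then obtain K where U: "\<And>x. open (U x)" "\<And>x. compact (K x)" "\<And>x. x \<in> U x" "\<And>x. U x \<subseteq> K x"
    by blast
  have open_U: "\<And>S. S \<in> range U \<Longrightarrow> open S" using U(1) by blast
  obtain F where F: "F \<subseteq> range U" "countable F" "\<Union>F = \<Union>(range U)"
    by (rule Lindelof[of "range U", OF open_U])
  show "\<exists>A. countable A \<and> A \<subseteq> sets N \<and> \<Union> A = space N \<and> (\<forall>a\<in>A. emeasure N a \<noteq> \<infinity>)"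
  proof (intro exI conjI ballI)
    show "countable F" by fact
    show "F \<subseteq> sets N" using F(1) open_U unfolding sets_N by (auto intro: borel_open)
    have "\<Union>(range U) = UNIV" using U(3) by blast
    then show "\<Union>F = space N" using F(3) space_N by simp
    fix a assume "a \<in> F"
    then obtain x where a: "a = U x" using F(1) by blast
    have "emeasure N a \<le> emeasure N (K x)"
      unfolding a by (rule emeasure_mono[OF U(4)]) (simp add: sets_N borel_closed compact_imp_closed U(2))
    also have "\<dots> < \<infinity>" by (rule finite_N[OF U(2)])
    finally show "emeasure N a \<noteq> \<infinity>" by simp
  qed
qed

lemma compact_translate_preimage:
  fixes K :: "'g::topological_group_add set"
  assumes "compact K"
  shows "compact {x. x + y \<in> K}"
proof -
  have "{x. x + y \<in> K} = (\<lambda>z. z + - y) ` K"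
  proof (intro set_eqI iffI)
    fix x assume "x \<in> {x. x + y \<in> K}"
    moreover have "x = (x + y) + - y" by (simp add: add.assoc)
    ultimately show "x \<in> (\<lambda>z. z + - y) ` K" by blast
  qed (auto simp: add.assoc)
  moreover have "compact ((\<lambda>z. z + - y) ` K)"
    by (rule compact_continuous_image[OF _ assms]) (intro continuous_intros)
  ultimately show ?thesis by simp
qed

locale lc_haar =
  fixes M :: "'g::{topological_group_add, t2_space, second_countable_topology} measure"
  assumes locally_compact: "locally_compact_space (euclidean :: 'g topology)"
    and haar: "left_haar_measure M"
begin

lemma sets_M: "sets M = sets borel" and space_M: "space M = UNIV"
  and emeasure_left_translate: "A \<in> sets borel \<Longrightarrow> emeasure M ((+) g ` A) = emeasure M A"
  and emeasure_compact_finite: "compact K \<Longrightarrow> emeasure M K < \<infinity>"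
  and emeasure_open_pos: "open U \<Longrightarrow> U \<noteq> {} \<Longrightarrow> emeasure M U > 0"
  using haar unfolding left_haar_measure_def by auto

lemma borel_measurable_M_iff: "f \<in> borel_measurable M \<longleftrightarrow> f \<in> borel_measurable borel"
  by (simp add: measurable_cong_sets[OF sets_M refl])

lemma measurable_M_if_continuous: "continuous_on UNIV f \<Longrightarrow> f \<in> measurable M M"
  using borel_measurable_continuous_onI measurable_cong_sets[OF sets_M sets_M] by blast

lemma sigma_finite_M: "sigma_finite_measure M"
  by (rule sigma_finite_if_finite_on_compacts[OF locally_compact sets_M space_M emeasure_compact_finite])

lemma distr_left_translate: "distr M M ((+) g) = M"
proof (rule measure_eqI)
  fix A assume A: "A \<in> sets (distr M M ((+) g))"
  have "(+) g -` A \<inter> space M = (+) (-g) ` A"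
  proof (intro set_eqI iffI)
    fix x assume "x \<in> (+) g -` A \<inter> space M"
    moreover have "x = -g + (g + x)" by (simp add: add.assoc)
    ultimately show "x \<in> (+) (-g) ` A" by blast
  qed (auto simp: space_M add.assoc)
  then have "emeasure (distr M M ((+) g)) A = emeasure M ((+) (-g) ` A)"
    using A by (simp add: emeasure_distr measurable_M_if_continuous continuous_intros)
  also have "\<dots> = emeasure M A" using A sets_M by (simp add: emeasure_left_translate)
  finally show "emeasure (distr M M ((+) g)) A = emeasure M A" .
qed simp

lemma nn_integral_left_translate:
  assumes "F \<in> borel_measurable M"
  shows "(\<integral>\<^sup>+x. F (g + x) \<partial>M) = integral\<^sup>N M F"
proof -
  have "integral\<^sup>N (distr M M ((+) g)) F = (\<integral>\<^sup>+x. F (g + x) \<partial>M)"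
    using assms by (intro nn_integral_distr measurable_M_if_continuous continuous_intros) simp
  then show ?thesis by (simp add: distr_left_translate)
qed

lemma borel_measurable_pair_iff:
  fixes N :: "'g measure"
  assumes "sets N = sets borel"
  shows "f \<in> borel_measurable (M \<Otimes>\<^sub>M N) \<longleftrightarrow> f \<in> borel_measurable borel"
  using sets_pair_measure_cong[OF sets_M assms] borel_prod measurable_cong_sets by metis

text \<open>Weil's argument: applied to the right translate of \<open>M\<close>, this identity shows that it is
  a constant multiple of \<open>M\<close>.\<close>

lemma nn_integral_mult_left_invariant:
  fixes N :: "'g measure" and a c :: "'g \<Rightarrow> ennreal"
  assumes sets_N: "sets N = sets borel" and sigma_finite_N: "sigma_finite_measure N"
    and N_invariant: "\<And>g F. F \<in> borel_measurable borel \<Longrightarrow> (\<integral>\<^sup>+x. F (g + x) \<partial>N) = integral\<^sup>N N F"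
    and a: "a \<in> borel_measurable borel" and c: "c \<in> borel_measurable borel"
  shows "integral\<^sup>N M a * integral\<^sup>N N c = (\<integral>\<^sup>+y. a (-y) * (\<integral>\<^sup>+x. c (x + y) \<partial>M) \<partial>N)"
proof -
  interpret M: sigma_finite_measure M by (rule sigma_finite_M)
  interpret pair_sigma_finite M N by (intro pair_sigma_finite.intro sigma_finite_M sigma_finite_N)
  have measurable: "(\<lambda>q. a (\<phi> q) * c (\<psi> q)) \<in> borel_measurable (M \<Otimes>\<^sub>M N)"
    if "continuous_on UNIV \<phi>" "continuous_on UNIV \<psi>" for \<phi> \<psi> :: "'g \<times> 'g \<Rightarrow> 'g"
    unfolding borel_measurable_pair_iff[OF sets_N]
    by (intro borel_measurable_times_ennreal borel_measurable_continuous_compose[OF that(1) a]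
        borel_measurable_continuous_compose[OF that(2) c])
  have m1: "(\<lambda>(x, y). a (-y) * c (x + y)) \<in> borel_measurable (M \<Otimes>\<^sub>M N)"
    using measurable[of "\<lambda>q. - snd q" "\<lambda>q. fst q + snd q"] by (simp add: split_beta' continuous_intros)
  have m2: "(\<lambda>(x, z). a (-z + x) * c z) \<in> borel_measurable (M \<Otimes>\<^sub>M N)"
    using measurable[of "\<lambda>q. - snd q + fst q" "\<lambda>q. snd q"] by (simp add: split_beta' continuous_intros)
  have "(\<integral>\<^sup>+y. a (-y) * (\<integral>\<^sup>+x. c (x + y) \<partial>M) \<partial>N) = (\<integral>\<^sup>+y. \<integral>\<^sup>+x. a (-y) * c (x + y) \<partial>M \<partial>N)"
    by (intro nn_integral_cong nn_integral_cmult[symmetric])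
      (simp add: borel_measurable_M_iff borel_measurable_continuous_compose[OF _ c] continuous_intros)
  also have "\<dots> = (\<integral>\<^sup>+x. \<integral>\<^sup>+y. a (-y) * c (x + y) \<partial>N \<partial>M)"
    by (rule Fubini'[OF m1])
  also have "\<dots> = (\<integral>\<^sup>+x. \<integral>\<^sup>+z. a (-z + x) * c z \<partial>N \<partial>M)"
  proof (rule nn_integral_cong)
    fix x
    have "(\<lambda>z. a (-z + x) * c z) \<in> borel_measurable borel"
      using borel_measurable_continuous_compose[OF _ a, of "\<lambda>z. -z + x"]
      by (intro borel_measurable_times_ennreal c) (simp add: continuous_intros)
    from N_invariant[OF this, of x]
    show "(\<integral>\<^sup>+y. a (-y) * c (x + y) \<partial>N) = (\<integral>\<^sup>+z. a (-z + x) * c z \<partial>N)"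
      by (simp add: minus_add add.assoc)
  qed
  also have "\<dots> = (\<integral>\<^sup>+z. \<integral>\<^sup>+x. a (-z + x) * c z \<partial>M \<partial>N)"
    by (rule Fubini'[OF m2, symmetric])
  also have "\<dots> = (\<integral>\<^sup>+z. \<integral>\<^sup>+x. a x * c z \<partial>M \<partial>N)"
  proof (rule nn_integral_cong)
    fix z
    have "(\<lambda>x. a x * c z) \<in> borel_measurable M"
      unfolding borel_measurable_M_iff by (intro borel_measurable_times_ennreal a) simp
    then show "(\<integral>\<^sup>+x. a (-z + x) * c z \<partial>M) = (\<integral>\<^sup>+x. a x * c z \<partial>M)"
      by (rule nn_integral_left_translate)
  qed
  also have "\<dots> = integral\<^sup>N M a * integral\<^sup>N N c"
    using a c by (simp add: nn_integral_multc nn_integral_cmult borel_measurable_M_iff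
        measurable_cong_sets[OF sets_N refl])
  finally show ?thesis by (rule sym)
qed

lemma right_translate_preimage_sets:
  assumes "C \<in> sets borel"
  shows "{x. x + y \<in> C} \<in> sets M"
proof -
  have "(\<lambda>x. x + y) -` C \<inter> space M \<in> sets M"
    using assms sets_M
    by (intro measurable_sets[OF measurable_M_if_continuous]) (simp_all add: continuous_intros)
  then show ?thesis by (simp add: space_M vimage_def)
qed

lemma nn_integral_indicator_right_translate:
  assumes "C \<in> sets borel"
  shows "(\<integral>\<^sup>+x. indicator C (x + y) \<partial>M) = emeasure M {x. x + y \<in> C}"
  using nn_integral_indicator[OF right_translate_preimage_sets[OF assms, of y]]
  by (simp add: indicator_def)

lemma emeasure_right_translate_pos:
  assumes "open U" "U \<noteq> {}" "U \<subseteq> C" "C \<in> sets borel"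
  shows "0 < emeasure M {x. x + y \<in> C}"
proof -
  have "open ((\<lambda>x. x + y) -` U)"
    by (rule continuous_open_vimage[OF assms(1)]) (intro continuous_intros)
  moreover obtain u where "u \<in> U" using assms(2) by blast
  then have "u + - y \<in> (\<lambda>x. x + y) -` U" by (simp add: add.assoc)
  then have "(\<lambda>x. x + y) -` U \<noteq> {}" by blast
  ultimately have "0 < emeasure M ((\<lambda>x. x + y) -` U)" by (rule emeasure_open_pos)
  also have "\<dots> \<le> emeasure M {x. x + y \<in> C}"
    using assms(3) right_translate_preimage_sets[OF assms(4)] by (intro emeasure_mono) auto
  finally show ?thesis .
qed

lemma borel_measurable_nn_integral_right_translate:
  assumes "F \<in> borel_measurable borel"
  shows "(\<lambda>y. \<integral>\<^sup>+x. F (x + y) \<partial>M) \<in> borel_measurable borel"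
proof -
  interpret M: sigma_finite_measure M by (rule sigma_finite_M)
  have sets_pair: "sets (borel \<Otimes>\<^sub>M M) = sets (borel :: ('g \<times> 'g) measure)"
    using sets_pair_measure_cong[OF refl sets_M] borel_prod by metis
  have "(\<lambda>q. F (snd q + fst q)) \<in> borel_measurable borel"
    by (rule borel_measurable_continuous_compose[OF _ assms]) (intro continuous_intros)
  then have "(\<lambda>(y, x). F (x + y)) \<in> borel_measurable (borel \<Otimes>\<^sub>M M)"
    by (simp add: measurable_cong_sets[OF sets_pair refl] split_beta')
  then show ?thesis by (rule M.borel_measurable_nn_integral)
qed

lemma nn_integral_left_invariant_factor:
  fixes N :: "'g measure"
  assumes sets_N: "sets N = sets borel" and sigma_finite_N: "sigma_finite_measure N"
    and N_invariant: "\<And>g F. F \<in> borel_measurable borel \<Longrightarrow> (\<integral>\<^sup>+x. F (g + x) \<partial>N) = integral\<^sup>N N F"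
    and C: "compact C" and U: "open U" "U \<noteq> {}" "U \<subseteq> C"
    and F: "F \<in> borel_measurable borel"
  shows "\<exists>A. integral\<^sup>N N F = A * emeasure N C \<and> integral\<^sup>N M F = A * emeasure M C"
proof -
  have C_sets: "C \<in> sets borel" by (simp add: C borel_closed compact_imp_closed)
  define m where "m y = (\<integral>\<^sup>+x. indicator C (x + y) \<partial>M)" for y
  have m_eq: "m y = emeasure M {x. x + y \<in> C}" for y
    unfolding m_def by (rule nn_integral_indicator_right_translate[OF C_sets])
  have m_pos: "0 < m y" for y
    unfolding m_eq by (rule emeasure_right_translate_pos[OF U C_sets])
  have m_finite: "m y < \<infinity>" for y
    unfolding m_eq by (intro emeasure_compact_finite compact_translate_preimage C)
  have m_measurable: "m \<in> borel_measurable borel"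
    unfolding m_def[abs_def] using C_sets by (intro borel_measurable_nn_integral_right_translate) simp
  define a where "a z = F (-z) / m (-z)" for z
  have a: "a \<in> borel_measurable borel"
    unfolding a_def[abs_def]
    by (intro borel_measurable_divide_ennreal borel_measurable_continuous_compose[OF _ F]
        borel_measurable_continuous_compose[OF _ m_measurable]) (simp_all add: continuous_intros)
  have a_m: "a (-y) * m y = F y" for y
    using m_pos[of y] m_finite[of y] by (simp add: a_def ennreal_divide_times)
  have "integral\<^sup>N N F = integral\<^sup>N M a * emeasure N C"
    using nn_integral_mult_left_invariant[OF sets_N sigma_finite_N N_invariant a, of "indicator C"] C_sets
    by (simp add: m_def[symmetric] a_m sets_N)
  moreover have "integral\<^sup>N M F = integral\<^sup>N M a * emeasure M C"
    using nn_integral_mult_left_invariant[OF sets_M sigma_finite_M _ a, of "indicator C"] C_sets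
    by (simp add: m_def[symmetric] a_m sets_M nn_integral_left_translate borel_measurable_M_iff)
  ultimately show ?thesis by blast
qed

lemma nn_integral_proportional_if_left_invariant:
  fixes N :: "'g measure"
  assumes sets_N: "sets N = sets borel" and space_N: "space N = UNIV"
    and N_invariant: "\<And>g F. F \<in> borel_measurable borel \<Longrightarrow> (\<integral>\<^sup>+x. F (g + x) \<partial>N) = integral\<^sup>N N F"
    and finite_N: "\<And>K. compact K \<Longrightarrow> emeasure N K < \<infinity>"
  shows "\<exists>r<\<infinity>. \<forall>F. F \<in> borel_measurable borel \<longrightarrow> integral\<^sup>N N F = r * integral\<^sup>N M F"
proof -
  have sigma_finite_N: "sigma_finite_measure N"
    by (rule sigma_finite_if_finite_on_compacts[OF locally_compact sets_N space_N finite_N])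
  have "\<exists>U C. open U \<and> compact C \<and> (0::'g) \<in> U \<and> U \<subseteq> C"
    using locally_compact unfolding locally_compact_space_def by (simp add: compactin_euclidean_iff)
  then obtain U C :: "'g set" where U: "open U" "U \<noteq> {}" "U \<subseteq> C" and C: "compact C" by blast
  have M_C: "0 < emeasure M C" "emeasure M C < \<infinity>"
    using emeasure_right_translate_pos[OF U, of 0] emeasure_compact_finite[OF C]
    by (simp_all add: C borel_closed compact_imp_closed)
  define r where "r = emeasure N C / emeasure M C"
  have "r < \<infinity>"
    using finite_N[OF C] M_C by (auto simp: r_def ennreal_divide_eq_top_iff less_top[symmetric])
  moreover have "emeasure M C * r = emeasure N C"
    unfolding r_def ennreal_times_divide mult.commute[of "emeasure M C"]
    using M_C by (intro mult_divide_eq_ennreal) auto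
  moreover have "integral\<^sup>N N F = r * integral\<^sup>N M F" if F: "F \<in> borel_measurable borel" for F
  proof -
    obtain A where "integral\<^sup>N N F = A * emeasure N C" "integral\<^sup>N M F = A * emeasure M C"
      using nn_integral_left_invariant_factor[OF sets_N sigma_finite_N N_invariant C U F] by blast
    with \<open>emeasure M C * r = emeasure N C\<close> show ?thesis by (simp add: ac_simps)
  qed
  ultimately show ?thesis by blast
qed

lemma nn_integral_right_translate:
  "\<exists>r<\<infinity>. \<forall>F. F \<in> borel_measurable borel \<longrightarrow> (\<integral>\<^sup>+x. F (x + g) \<partial>M) = r * integral\<^sup>N M F"
proof -
  define N where "N = distr M M (\<lambda>x. x + g)"
  have shift: "(\<lambda>x. x + g) \<in> measurable M M"
    by (intro measurable_M_if_continuous continuous_intros)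
  have sets_N: "sets N = sets borel" and space_N: "space N = UNIV"
    by (simp_all add: N_def sets_M space_M)
  have integral_N: "integral\<^sup>N N F = (\<integral>\<^sup>+x. F (x + g) \<partial>M)" if "F \<in> borel_measurable borel" for F
    unfolding N_def using that by (intro nn_integral_distr[OF shift]) (simp add: borel_measurable_M_iff)
  have "(\<integral>\<^sup>+x. F (h + x) \<partial>N) = integral\<^sup>N N F" if F: "F \<in> borel_measurable borel" for h F
  proof -
    have "(\<lambda>x. F (h + x)) \<in> borel_measurable borel" "(\<lambda>y. F (y + g)) \<in> borel_measurable M"
      unfolding borel_measurable_M_iff
      by (rule borel_measurable_continuous_compose[OF _ F], intro continuous_intros)+
    then show ?thesis
      using nn_integral_left_translate[of "\<lambda>y. F (y + g)" h] by (simp add: integral_N F add.assoc)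
  qed
  moreover have "emeasure N K < \<infinity>" if "compact K" for K
  proof -
    have "emeasure N K = emeasure M ((\<lambda>x. x + g) -` K \<inter> space M)"
      unfolding N_def using that sets_M
      by (intro emeasure_distr[OF shift]) (simp add: borel_closed compact_imp_closed)
    also have "(\<lambda>x. x + g) -` K \<inter> space M = {x. x + g \<in> K}" by (auto simp: space_M)
    also have "emeasure M {x. x + g \<in> K} < \<infinity>"
      by (intro emeasure_compact_finite compact_translate_preimage that)
    finally show ?thesis .
  qed
  ultimately obtain r where "r < \<infinity>" "\<And>F. F \<in> borel_measurable borel \<Longrightarrow> integral\<^sup>N N F = r * integral\<^sup>N M F"
    using nn_integral_proportional_if_left_invariant[OF sets_N space_N] by blast
  then show ?thesis using integral_N by auto
qed

lemma AE_right_translate: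
  assumes "AE x in M. P x"
  shows "AE x in M. P (x + g)"
proof -
  obtain N where N: "{x \<in> space M. \<not> P x} \<subseteq> N" "emeasure M N = 0" "N \<in> sets M"
    using assms by (rule AE_E)
  obtain r where "\<And>F. F \<in> borel_measurable borel \<Longrightarrow> (\<integral>\<^sup>+x. F (x + g) \<partial>M) = r * integral\<^sup>N M F"
    using nn_integral_right_translate by blast
  from this[of "indicator N"] have "(\<integral>\<^sup>+x. indicator N (x + g) \<partial>M) = 0"
    using N(2,3) sets_M by simp
  then have "emeasure M {x. x + g \<in> N} = 0"
    using N(3) sets_M by (simp add: nn_integral_indicator_right_translate)
  moreover have "{x \<in> space M. \<not> P (x + g)} \<subseteq> {x. x + g \<in> N}" using N(1) by (auto simp: space_M)
  ultimately show ?thesis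
    using right_translate_preimage_sets[of N g] N(3) sets_M by (intro AE_I') (auto simp: null_sets_def)
qed

end

definition Lp_pow :: "'a measure \<Rightarrow> real \<Rightarrow> ('a \<Rightarrow> 'v::banach) \<Rightarrow> ennreal" where
  "Lp_pow M p f = (\<integral>\<^sup>+x. ennreal (norm (f x) powr p) \<partial>M)"

lemma memLp_iff_Lp_pow:
  fixes f :: "'a \<Rightarrow> 'v::{banach, second_countable_topology}"
  shows "memLp M p f \<longleftrightarrow> f \<in> borel_measurable M \<and> Lp_pow M p f < \<infinity>"
proof
  assume "memLp M p f"
  then have f: "f \<in> borel_measurable M" and i: "integrable M (\<lambda>x. norm (f x) powr p)"
    by (auto simp: memLp_def)
  from i have "(\<integral>\<^sup>+x. ennreal (norm (norm (f x) powr p)) \<partial>M) < \<infinity>"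
    by (simp add: integrable_iff_bounded)
  then show "f \<in> borel_measurable M \<and> Lp_pow M p f < \<infinity>" using f by (simp add: Lp_pow_def)
next
  assume a: "f \<in> borel_measurable M \<and> Lp_pow M p f < \<infinity>"
  have "(\<lambda>x. norm (f x) powr p) \<in> borel_measurable M" using conjunct1[OF a] by measurable
  then have "integrable M (\<lambda>x. norm (f x) powr p)"
    using a by (simp add: integrable_iff_bounded Lp_pow_def)
  then show "memLp M p f" using a by (simp add: memLp_def)
qed

lemma Lp_pow_eq_Lp_norm_powr:
  fixes f :: "'a \<Rightarrow> 'v::{banach, second_countable_topology}"
  assumes "memLp M p f" "p > 0"
  shows "Lp_pow M p f = ennreal (Lp_norm M p f powr p)"
proof -
  have f: "f \<in> borel_measurable M" and q: "Lp_pow M p f < \<infinity>" using assms memLp_iff_Lp_pow by auto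
  have m: "(\<lambda>x. norm (f x) powr p) \<in> borel_measurable M" using f by measurable
  have I: "(\<integral>x. norm (f x) powr p \<partial>M) = enn2real (Lp_pow M p f)"
    unfolding Lp_pow_def by (rule integral_eq_nn_integral[OF m]) simp
  have I0: "(\<integral>x. norm (f x) powr p \<partial>M) \<ge> 0" by (simp add: integral_nonneg)
  have "Lp_norm M p f powr p = (\<integral>x. norm (f x) powr p \<partial>M)"
    unfolding Lp_norm_def using assms(2) I0 by (simp add: powr_powr)
  then show ?thesis using I q by (simp add: less_top)
qed

lemma Lp_pow_cong_AE: "AE x in M. f x = g x \<Longrightarrow> Lp_pow M p f = Lp_pow M p g"
  unfolding Lp_pow_def by (rule nn_integral_cong_AE) auto

lemma Lp_pow_scaleR:
  fixes f :: "'a \<Rightarrow> 'v::{banach, second_countable_topology}"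
  assumes p: "p > 0" and f: "f \<in> borel_measurable M"
  shows "Lp_pow M p (\<lambda>x. c *\<^sub>R f x) = ennreal (\<bar>c\<bar> powr p) * Lp_pow M p f"
proof -
  have "Lp_pow M p (\<lambda>x. c *\<^sub>R f x) = (\<integral>\<^sup>+x. ennreal (\<bar>c\<bar> powr p) * ennreal (norm (f x) powr p) \<partial>M)"
    unfolding Lp_pow_def by (rule nn_integral_cong) (simp add: powr_mult ennreal_mult)
  also have "\<dots> = ennreal (\<bar>c\<bar> powr p) * Lp_pow M p f"
    unfolding Lp_pow_def by (rule nn_integral_cmult) (use f in measurable)
  finally show ?thesis .
qed

lemma powr_add_le_two_powr:
  fixes a b :: real
  assumes "a \<ge> 0" "b \<ge> 0" "p > 0"
  shows "(a + b) powr p \<le> 2 powr p * (a powr p + b powr p)"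
proof -
  have "a + b \<le> 2 * max a b" by simp
  then have "(a + b) powr p \<le> (2 * max a b) powr p"
    using assms by (intro powr_mono2) auto
  also have "\<dots> = 2 powr p * max a b powr p" using assms by (simp add: powr_mult)
  also have "max a b powr p \<le> a powr p + b powr p"
    by (cases "a \<le> b") (auto simp: max_def)
  then have "2 powr p * max a b powr p \<le> 2 powr p * (a powr p + b powr p)" by simp
  finally show ?thesis .
qed

lemma Lp_pow_add_le:
  fixes f g :: "'a \<Rightarrow> 'v::{banach, second_countable_topology}"
  assumes f: "f \<in> borel_measurable M" and g: "g \<in> borel_measurable M" and p: "p > 0"
  shows "Lp_pow M p (\<lambda>x. f x + g x) \<le> ennreal (2 powr p) * (Lp_pow M p f + Lp_pow M p g)"
proof -
  have "Lp_pow M p (\<lambda>x. f x + g x)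
      \<le> (\<integral>\<^sup>+x. ennreal (2 powr p) * (ennreal (norm (f x) powr p) + ennreal (norm (g x) powr p)) \<partial>M)"
    unfolding Lp_pow_def
  proof (rule nn_integral_mono)
    fix x
    have "norm (f x + g x) powr p \<le> (norm (f x) + norm (g x)) powr p"
      using p by (intro powr_mono2) (auto simp: norm_triangle_ineq)
    also have "\<dots> \<le> 2 powr p * (norm (f x) powr p + norm (g x) powr p)"
      using p by (intro powr_add_le_two_powr) auto
    finally show "ennreal (norm (f x + g x) powr p)
        \<le> ennreal (2 powr p) * (ennreal (norm (f x) powr p) + ennreal (norm (g x) powr p))"
      by (simp add: ennreal_mult[symmetric] ennreal_plus[symmetric] del: ennreal_plus)
  qed
  also have "\<dots> = ennreal (2 powr p) * (Lp_pow M p f + Lp_pow M p g)"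
    unfolding Lp_pow_def using f g
    by (simp add: nn_integral_cmult nn_integral_add)
  finally show ?thesis .
qed

lemma Lp_pow_uminus: "Lp_pow M p (\<lambda>x. - f x) = Lp_pow M p f"
  by (simp add: Lp_pow_def)

lemma Lp_pow_diff_commute: "Lp_pow M p (\<lambda>x. f x - g x) = Lp_pow M p (\<lambda>x. g x - f x)"
  by (simp add: Lp_pow_def norm_minus_commute)

lemma Lp_pow_diff_le:
  fixes f g :: "'a \<Rightarrow> 'v::{banach, second_countable_topology}"
  assumes f: "f \<in> borel_measurable M" and g: "g \<in> borel_measurable M" and p: "p > 0"
  shows "Lp_pow M p (\<lambda>x. f x - g x) \<le> ennreal (2 powr p) * (Lp_pow M p f + Lp_pow M p g)"
proof -
  have "Lp_pow M p (\<lambda>x. f x + - g x) \<le> ennreal (2 powr p) * (Lp_pow M p f + Lp_pow M p (\<lambda>x. - g x))"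
    by (rule Lp_pow_add_le[OF f _ p]) (use g in measurable)
  then show ?thesis by (simp add: Lp_pow_uminus)
qed

lemma AE_eq_0_if_Lp_pow_eq_0:
  fixes f :: "'a \<Rightarrow> 'v::{banach, second_countable_topology}"
  assumes f: "f \<in> borel_measurable M" and p: "p > 0" and z: "Lp_pow M p f = 0"
  shows "AE x in M. f x = 0"
proof -
  have "(\<lambda>x. ennreal (norm (f x) powr p)) \<in> borel_measurable M" using f by measurable
  then have "AE x in M. ennreal (norm (f x) powr p) = 0"
    using z unfolding Lp_pow_def by (simp add: nn_integral_0_iff_AE)
  then show ?thesis by eventually_elim (use p in simp)
qed

lemma memLp_diff:
  fixes f g :: "'a \<Rightarrow> 'v::{banach, second_countable_topology}"
  assumes "memLp M p f" "memLp M p g" "p > 0"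
  shows "memLp M p (\<lambda>x. f x - g x)"
proof -
  have f: "f \<in> borel_measurable M" "Lp_pow M p f < \<infinity>" and g: "g \<in> borel_measurable M" "Lp_pow M p g < \<infinity>"
    using assms memLp_iff_Lp_pow by auto
  have "ennreal (2 powr p) * (Lp_pow M p f + Lp_pow M p g) < \<infinity>"
    using f g by (simp add: ennreal_mult_less_top less_top)
  then show ?thesis
    using Lp_pow_diff_le[OF f(1) g(1) assms(3)] f g by (auto simp: memLp_iff_Lp_pow)
qed

lemma memLp_scaleR:
  fixes f :: "'a \<Rightarrow> 'v::{banach, second_countable_topology}"
  assumes "memLp M p f" "p > 0"
  shows "memLp M p (\<lambda>x. c *\<^sub>R f x)"
proof -
  have f: "f \<in> borel_measurable M" "Lp_pow M p f < \<infinity>" using assms memLp_iff_Lp_pow by auto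
  then show ?thesis using assms(2) by (auto simp: memLp_iff_Lp_pow Lp_pow_scaleR ennreal_mult_less_top less_top)
qed

lemma norm_suminf_powr_le:
  fixes v :: "nat \<Rightarrow> 'v::banach"
  assumes p: "p > 0" and summable: "summable (\<lambda>j. (2 powr p) ^ j * norm (v j) powr p)"
  shows "summable (\<lambda>j. norm (v j))"
    and "norm (\<Sum>j. v j) powr p \<le> 2 powr p * (\<Sum>j. (2 powr p) ^ j * norm (v j) powr p)"
proof -
  define R where "R = (\<Sum>j. (2 powr p) ^ j * norm (v j) powr p)"
  define m where "m = R powr (1/p)"
  have "R \<ge> 0" unfolding R_def by (intro suminf_nonneg summable) simp
  have bound: "norm (v j) \<le> m * (1/2) ^ j" for j
  proof -
    have "(2 powr p) ^ j * norm (v j) powr p \<le> R"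
      unfolding R_def using sum_le_suminf[OF summable, of "{j}"] by simp
    moreover have "(2 powr p) ^ j = ((2::real) ^ j) powr p"
    proof -
      have "(2::real) ^ j = 2 powr real j" by (simp add: powr_realpow)
      then show ?thesis by (simp add: powr_powr powr_power mult.commute)
    qed
    ultimately have "(2 ^ j * norm (v j)) powr p \<le> R" by (simp add: powr_mult)
    then have "((2 ^ j * norm (v j)) powr p) powr (1/p) \<le> m"
      using p unfolding m_def by (intro powr_mono2) auto
    then have "2 ^ j * norm (v j) \<le> m" using p by (simp add: powr_powr)
    then show ?thesis by (simp add: field_simps)
  qed
  have geometric: "summable (\<lambda>j. m * (1/2::real) ^ j)" by (intro summable_mult summable_geometric) simp
  show summable_v: "summable (\<lambda>j. norm (v j))"
    by (rule summable_comparison_test[OF _ geometric]) (use bound in auto)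
  have "norm (\<Sum>j. v j) \<le> (\<Sum>j. norm (v j))" by (rule summable_norm[OF summable_v])
  also have "\<dots> \<le> (\<Sum>j. m * (1/2) ^ j)" by (rule suminf_le[OF bound summable_v geometric])
  also have "\<dots> = m * 2" by (simp add: suminf_mult[OF summable_geometric] suminf_geometric)
  finally have "norm (\<Sum>j. v j) powr p \<le> (m * 2) powr p" using p by (intro powr_mono2) auto
  also have "\<dots> = 2 powr p * R" using \<open>R \<ge> 0\<close> p by (simp add: powr_mult m_def powr_powr mult.commute)
  finally show "norm (\<Sum>j. v j) powr p \<le> 2 powr p * R" .
qed

lemma Lp_series_if_geometric_decay:
  fixes d :: "nat \<Rightarrow> 'a \<Rightarrow> 'v::{banach, second_countable_topology}"
  assumes p: "p > 0" and d: "\<And>j. d j \<in> borel_measurable M"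
    and decay: "\<And>j. ennreal ((2 powr p) ^ j) * Lp_pow M p (d j) \<le> ennreal (C * (1/2) ^ j)"
    and C: "0 \<le> C"
  shows "AE x in M. summable (\<lambda>j. norm (d j x))" and "memLp M p (\<lambda>x. \<Sum>j. d j x)"
proof -
  define G where "G x = (\<Sum>j. ennreal ((2 powr p) ^ j * norm (d j x) powr p))" for x
  have G: "G \<in> borel_measurable M" unfolding G_def[abs_def] using d by measurable
  have "integral\<^sup>N M G = (\<Sum>j. \<integral>\<^sup>+x. ennreal ((2 powr p) ^ j) * ennreal (norm (d j x) powr p) \<partial>M)"
    unfolding G_def using d by (subst nn_integral_suminf) (simp_all add: ennreal_mult)
  also have "\<dots> = (\<Sum>j. ennreal ((2 powr p) ^ j) * Lp_pow M p (d j))"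
    unfolding Lp_pow_def using d by (simp add: nn_integral_cmult)
  also have "\<dots> \<le> (\<Sum>j. ennreal (C * (1/2) ^ j))" by (intro suminf_le decay) simp_all
  also have "\<dots> = ennreal (C * 2)"
    using C by (simp add: suminf_ennreal2 summable_mult summable_geometric
        suminf_mult[OF summable_geometric] suminf_geometric)
  finally have integral_G: "integral\<^sup>N M G \<le> ennreal (C * 2)" .
  then have "AE x in M. G x \<noteq> \<infinity>" by (intro nn_integral_PInf_AE G) (auto simp: top_unique)
  have pointwise: "summable (\<lambda>j. norm (d j x)) \<and>
      ennreal (norm (\<Sum>j. d j x) powr p) \<le> ennreal (2 powr p) * G x" if "G x \<noteq> \<infinity>" for x
  proof -
    have summable: "summable (\<lambda>j. (2 powr p) ^ j * norm (d j x) powr p)"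
      using that unfolding G_def by (intro summable_suminf_not_top) simp_all
    have "G x = ennreal (\<Sum>j. (2 powr p) ^ j * norm (d j x) powr p)"
      unfolding G_def using summable by (intro suminf_ennreal2) simp_all
    moreover have "0 \<le> (\<Sum>j. (2 powr p) ^ j * norm (d j x) powr p)"
      by (intro suminf_nonneg summable) simp
    ultimately show ?thesis
      using norm_suminf_powr_le[OF p summable] by (simp add: ennreal_mult[symmetric] ennreal_leI)
  qed
  show "AE x in M. summable (\<lambda>j. norm (d j x))"
    using \<open>AE x in M. G x \<noteq> \<infinity>\<close> by eventually_elim (use pointwise in blast)
  have "AE x in M. ennreal (norm (\<Sum>j. d j x) powr p) \<le> ennreal (2 powr p) * G x"
    using \<open>AE x in M. G x \<noteq> \<infinity>\<close> by eventually_elim (use pointwise in blast)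
  then have "Lp_pow M p (\<lambda>x. \<Sum>j. d j x) \<le> (\<integral>\<^sup>+x. ennreal (2 powr p) * G x \<partial>M)"
    unfolding Lp_pow_def by (rule nn_integral_mono_AE)
  also have "\<dots> = ennreal (2 powr p) * integral\<^sup>N M G" by (rule nn_integral_cmult[OF G])
  also have "\<dots> < \<infinity>"
    using le_less_trans[OF integral_G ennreal_less_top] by (simp add: ennreal_mult_less_top)
  finally show "memLp M p (\<lambda>x. \<Sum>j. d j x)" using d by (simp add: memLp_iff_Lp_pow)
qed

lemma Lp_norm_scaleR:
  assumes p: "p > 0"
  shows "Lp_norm M p (\<lambda>x. c *\<^sub>R f x) = \<bar>c\<bar> * Lp_norm M p f"
proof -
  have "(\<integral>x. norm (c *\<^sub>R f x) powr p \<partial>M) = (\<integral>x. \<bar>c\<bar> powr p * norm (f x) powr p \<partial>M)"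
    by (simp add: powr_mult)
  also have "\<dots> = \<bar>c\<bar> powr p * (\<integral>x. norm (f x) powr p \<partial>M)" by (rule integral_mult_right_zero)
  finally have e: "(\<integral>x. norm (c *\<^sub>R f x) powr p \<partial>M) = \<bar>c\<bar> powr p * (\<integral>x. norm (f x) powr p \<partial>M)" .
  have I0: "(\<integral>x. norm (f x) powr p \<partial>M) \<ge> 0" by (simp add: integral_nonneg)
  show ?thesis unfolding Lp_norm_def e using I0 p
    by (simp add: powr_mult powr_powr)
qed

lemma Lp_norm_nonneg: "Lp_norm M p f \<ge> 0"
  by (simp add: Lp_norm_def)

lemma Lp_norm_le_if_Lp_opnorm_le:
  fixes T :: "('a \<Rightarrow> 'v::{banach, second_countable_topology}) \<Rightarrow> ('a \<Rightarrow> 'v)"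
  assumes p: "p > 0" and op: "Lp_opnorm M p T \<le> ennreal q" and q: "q \<ge> 0"
    and hom: "\<And>c h. T (\<lambda>x. c *\<^sub>R h x) = (\<lambda>x. c *\<^sub>R T h x)"
    and h: "memLp M p h"
  shows "Lp_norm M p (T h) \<le> q * Lp_norm M p h"
proof -
  have unit_ball: "Lp_norm M p (T h') \<le> q" if "memLp M p h'" "Lp_norm M p h' \<le> 1" for h'
  proof -
    have "ennreal (Lp_norm M p (T h')) \<le> Lp_opnorm M p T"
      unfolding Lp_opnorm_def by (rule SUP_upper) (use that in simp)
    also have "\<dots> \<le> ennreal q" by (rule op)
    finally show ?thesis using q by (simp add: ennreal_le_iff)
  qed
  have T_scaleR: "Lp_norm M p (T (\<lambda>x. c *\<^sub>R h x)) = \<bar>c\<bar> * Lp_norm M p (T h)" for c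
    unfolding hom by (rule Lp_norm_scaleR[OF p])
  have h_scaled: "memLp M p (\<lambda>x. c *\<^sub>R h x)" for c by (rule memLp_scaleR[OF h p])
  show ?thesis
  proof (cases "Lp_norm M p h > 0")
    case True
    define c where "c = 1 / Lp_norm M p h"
    have c0: "c > 0" using True by (simp add: c_def)
    have "Lp_norm M p (\<lambda>x. c *\<^sub>R h x) = 1"
      using True p by (simp add: Lp_norm_scaleR c_def)
    then have "Lp_norm M p (T (\<lambda>x. c *\<^sub>R h x)) \<le> q" using unit_ball[OF h_scaled] by simp
    then have "c * Lp_norm M p (T h) \<le> q" using c0 by (simp add: T_scaleR)
    then show ?thesis using True by (simp add: c_def field_simps)
  next
    case False
    then have h0: "Lp_norm M p h = 0" using Lp_norm_nonneg[of M p h] by simp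
    show ?thesis
    proof (rule ccontr)
      assume "\<not> ?thesis"
      then have pos: "Lp_norm M p (T h) > 0" using h0 by simp
      define c where "c = (q + 1) / Lp_norm M p (T h)"
      have c0: "c > 0" using pos q by (simp add: c_def)
      have "Lp_norm M p (\<lambda>x. c *\<^sub>R h x) = 0" using p h0 by (simp add: Lp_norm_scaleR)
      then have "Lp_norm M p (T (\<lambda>x. c *\<^sub>R h x)) \<le> q" using unit_ball[OF h_scaled] by simp
      then have "c * Lp_norm M p (T h) \<le> q" using c0 by (simp add: T_scaleR)
      moreover have "c * Lp_norm M p (T h) = q + 1" using pos by (simp add: c_def)
      ultimately show False by simp
    qed
  qed
qed

lemma Lp_pow_le_if_Lp_norm_less:
  fixes h :: "'a \<Rightarrow> 'v::{banach, second_countable_topology}"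
  assumes "memLp M p h" "p > 0" "Lp_norm M p h < e"
  shows "Lp_pow M p h \<le> ennreal (e powr p)"
proof -
  have "Lp_pow M p h = ennreal (Lp_norm M p h powr p)" by (rule Lp_pow_eq_Lp_norm_powr[OF assms(1,2)])
  also have "\<dots> \<le> ennreal (e powr p)"
    using assms(2,3) by (intro ennreal_leI powr_mono2) (simp_all add: Lp_norm_nonneg less_imp_le)
  finally show ?thesis .
qed

lemma ennreal_le_absorb:
  fixes x a :: ennreal
  assumes "x \<le> a + ennreal r * x" "x < \<infinity>" "0 \<le> r" "r < 1"
  shows "x \<le> ennreal (1 / (1 - r)) * a"
proof (cases a rule: ennreal_cases)
  case (real A)
  obtain X where X: "x = ennreal X" "X \<ge> 0" using assms(2) by (cases x rule: ennreal_cases) auto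
  have "ennreal X \<le> ennreal (A + r * X)" using assms(1) real X assms(3)
    by (simp add: ennreal_mult[symmetric] ennreal_plus[symmetric] del: ennreal_plus)
  moreover have "0 \<le> A + r * X" using real X assms(3) by simp
  ultimately have "X \<le> A + r * X" by (simp add: ennreal_le_iff del: ennreal_plus)
  then have "X * (1 - r) \<le> A" by (simp add: algebra_simps)
  then have "X \<le> A / (1 - r)" using assms(4) by (simp add: field_simps)
  then have "ennreal X \<le> ennreal (1 / (1 - r) * A)" by (simp add: ennreal_leI)
  also have "\<dots> = ennreal (1 / (1 - r)) * ennreal A" by (rule ennreal_mult') (use assms(4) in simp)
  finally show ?thesis using X real by simp
next
  case top
  have "1 / (1 - r) > 0" using assms(4) by simp
  then show ?thesis using top by (simp add: ennreal_mult_top)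
qed

lemma ennreal_eq_0_if_le_epsilon:
  fixes x K :: ennreal
  assumes K: "K < \<infinity>" and le: "\<And>\<epsilon>. \<epsilon> > 0 \<Longrightarrow> x \<le> K * ennreal \<epsilon>"
  shows "x = 0"
proof -
  obtain k where k: "K = ennreal k" "k \<ge> 0" using K by (cases K rule: ennreal_cases) auto
  have "x \<le> 0 + ennreal e" if "0 < e" for e :: real
  proof -
    define \<delta> where "\<delta> = e / (k + 1)"
    have "0 < \<delta>" using that k by (simp add: \<delta>_def)
    moreover have "(k + 1) * \<delta> = e" using k by (simp add: \<delta>_def)
    ultimately have \<delta>: "0 < \<delta>" "k * \<delta> \<le> e" by (auto simp: distrib_right)
    have "x \<le> K * ennreal \<delta>" by (rule le[OF \<delta>(1)])
    also have "\<dots> = ennreal (k * \<delta>)" using k \<delta> by (simp add: ennreal_mult)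
    also have "\<dots> \<le> ennreal e" by (rule ennreal_leI[OF \<delta>(2)])
    finally show ?thesis by simp
  qed
  then have "x \<le> 0" by (rule ennreal_le_epsilon)
  then show ?thesis by simp
qed

lemma pi_p_scaleR: "pi_p \<pi>0 g (\<lambda>x. c *\<^sub>R h x) = (\<lambda>x. c *\<^sub>R pi_p \<pi>0 g h x)"
  by (simp add: pi_p_def blinfun.scaleR_right)

lemma pi_p_diff: "pi_p \<pi>0 g (\<lambda>x. f x - h x) x = pi_p \<pi>0 g f x - pi_p \<pi>0 g h x"
  by (simp add: pi_p_def blinfun.diff_right)

locale haar_Lp = lc_haar M for M :: "'g::{topological_group_add, t2_space, second_countable_topology} measure" +
  fixes \<pi>0 :: "'g \<Rightarrow> ('v::{banach, second_countable_topology} \<Rightarrow>\<^sub>L 'v)" and p :: real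
  assumes p_gt_1: "p > 1"
begin

lemma p_pos: "p > 0"
  using p_gt_1 by simp

lemma borel_measurable_pi_p:
  assumes "h \<in> borel_measurable M"
  shows "pi_p \<pi>0 g h \<in> borel_measurable M"
proof -
  have "(\<lambda>x. h (x + g)) \<in> borel_measurable M"
    by (rule measurable_compose[OF measurable_M_if_continuous assms]) (intro continuous_intros)
  moreover have "continuous_on UNIV (blinfun_apply (\<pi>0 g))"
    by (intro linear_continuous_on blinfun.bounded_linear_right)
  ultimately show ?thesis
    unfolding pi_p_def by (rule borel_measurable_continuous_on[rotated])
qed

lemma Lp_pow_pi_p_le:
  "\<exists>C<\<infinity>. \<forall>h. h \<in> borel_measurable M \<longrightarrow> Lp_pow M p (pi_p \<pi>0 g h) \<le> C * Lp_pow M p h"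
proof -
  obtain r where r: "r < \<infinity>"
    "\<And>F. F \<in> borel_measurable borel \<Longrightarrow> (\<integral>\<^sup>+x. F (x + g) \<partial>M) = r * integral\<^sup>N M F"
    using nn_integral_right_translate[of g] by blast
  show ?thesis
  proof (intro exI conjI allI impI)
    show "ennreal (norm (\<pi>0 g) powr p) * r < \<infinity>" using r(1) by (simp add: ennreal_mult_less_top)
    fix h :: "'g \<Rightarrow> 'v" assume h: "h \<in> borel_measurable M"
    have F: "(\<lambda>y. ennreal (norm (h y) powr p)) \<in> borel_measurable borel"
      using h unfolding borel_measurable_M_iff by measurable
    have h_shift: "(\<lambda>x. ennreal (norm (h (x + g)) powr p)) \<in> borel_measurable borel"
      by (rule borel_measurable_continuous_compose[OF _ F]) (intro continuous_intros)
    have "Lp_pow M p (pi_p \<pi>0 g h)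
        \<le> (\<integral>\<^sup>+x. ennreal (norm (\<pi>0 g) powr p) * ennreal (norm (h (x + g)) powr p) \<partial>M)"
      unfolding Lp_pow_def pi_p_def
    proof (rule nn_integral_mono)
      fix x
      have "norm (\<pi>0 g (h (x + g))) powr p \<le> (norm (\<pi>0 g) * norm (h (x + g))) powr p"
        using p_pos by (intro powr_mono2 norm_blinfun) auto
      then show "ennreal (norm (\<pi>0 g (h (x + g))) powr p)
          \<le> ennreal (norm (\<pi>0 g) powr p) * ennreal (norm (h (x + g)) powr p)"
        by (simp add: powr_mult ennreal_mult[symmetric] ennreal_leI)
    qed
    also have "\<dots> = ennreal (norm (\<pi>0 g) powr p) * (\<integral>\<^sup>+x. ennreal (norm (h (x + g)) powr p) \<partial>M)"
      by (rule nn_integral_cmult) (simp add: borel_measurable_M_iff h_shift)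
    also have "(\<integral>\<^sup>+x. ennreal (norm (h (x + g)) powr p) \<partial>M) = r * Lp_pow M p h"
      unfolding Lp_pow_def by (rule r(2)[OF F])
    finally show "Lp_pow M p (pi_p \<pi>0 g h) \<le> ennreal (norm (\<pi>0 g) powr p) * r * Lp_pow M p h"
      by (simp add: mult.assoc)
  qed
qed

lemma memLp_pi_p:
  assumes "memLp M p h"
  shows "memLp M p (pi_p \<pi>0 g h)"
proof -
  have h: "h \<in> borel_measurable M" "Lp_pow M p h < \<infinity>" using assms by (auto simp: memLp_iff_Lp_pow)
  obtain C where "C < \<infinity>" "Lp_pow M p (pi_p \<pi>0 g h) \<le> C * Lp_pow M p h"
    using Lp_pow_pi_p_le[of g] h(1) by blast
  then have "Lp_pow M p (pi_p \<pi>0 g h) < \<infinity>"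
    using h(2) by (auto simp: ennreal_mult_less_top intro: le_less_trans)
  then show ?thesis using borel_measurable_pi_p[OF h(1)] by (simp add: memLp_iff_Lp_pow)
qed

lemma Lp_pow_pi_p_le_Lp_opnorm:
  assumes op: "Lp_opnorm M p (pi_p \<pi>0 t) \<le> ennreal q" and q: "q \<ge> 0" and h: "memLp M p h"
  shows "Lp_pow M p (pi_p \<pi>0 t h) \<le> ennreal (q powr p) * Lp_pow M p h"
proof -
  have "Lp_norm M p (pi_p \<pi>0 t h) \<le> q * Lp_norm M p h"
    by (rule Lp_norm_le_if_Lp_opnorm_le[OF p_pos op q _ h]) (rule pi_p_scaleR)
  then have "Lp_norm M p (pi_p \<pi>0 t h) powr p \<le> (q * Lp_norm M p h) powr p"
    using p_pos by (intro powr_mono2) (simp_all add: Lp_norm_nonneg)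
  then have "ennreal (Lp_norm M p (pi_p \<pi>0 t h) powr p) \<le> ennreal (q powr p) * ennreal (Lp_norm M p h powr p)"
    using q by (simp add: powr_mult ennreal_mult[symmetric] Lp_norm_nonneg ennreal_leI)
  then show ?thesis
    using h p_pos memLp_pi_p[OF h] by (simp add: Lp_pow_eq_Lp_norm_powr)
qed

lemma two_powr_mult_quarter_powr_le: "2 powr p * (1/4) powr p \<le> 1/2"
proof -
  have "2 powr p * (1/4) powr p = (1/2) powr p" by (simp add: powr_mult[symmetric])
  also have "\<dots> \<le> 1/2" using p_gt_1 by (intro powr_le_one_le) auto
  finally show ?thesis .
qed

lemma Lp_pow_pi_p_iterate_decay:
  assumes op: "Lp_opnorm M p (pi_p \<pi>0 t) \<le> ennreal (1/4)"
    and \<beta>: "memLp M p \<beta>" and B: "Lp_pow M p \<beta> = ennreal B" "B \<ge> 0"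
  shows "ennreal ((2 powr p) ^ j) * Lp_pow M p ((pi_p \<pi>0 t ^^ j) \<beta>) \<le> ennreal (B * (1/2) ^ j)"
proof -
  define \<theta> where "\<theta> = (1/4::real) powr p"
  have iterate: "memLp M p ((pi_p \<pi>0 t ^^ i) \<beta>)" for i
    by (induction i) (simp_all add: \<beta> memLp_pi_p)
  have small: "Lp_pow M p ((pi_p \<pi>0 t ^^ i) \<beta>) \<le> ennreal (\<theta> ^ i * B)" for i
  proof (induction i)
    case 0 then show ?case by (simp add: B)
  next
    case (Suc i)
    have "Lp_pow M p ((pi_p \<pi>0 t ^^ Suc i) \<beta>) \<le> ennreal \<theta> * Lp_pow M p ((pi_p \<pi>0 t ^^ i) \<beta>)"
      unfolding \<theta>_def funpow.simps o_apply by (rule Lp_pow_pi_p_le_Lp_opnorm[OF op _ iterate]) simp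
    also have "\<dots> \<le> ennreal \<theta> * ennreal (\<theta> ^ i * B)" by (rule mult_left_mono[OF Suc]) simp
    also have "\<dots> = ennreal (\<theta> ^ Suc i * B)" using B(2) by (simp add: \<theta>_def ennreal_mult mult.assoc)
    finally show ?case .
  qed
  have "2 powr p * \<theta> \<le> 1/2" unfolding \<theta>_def by (rule two_powr_mult_quarter_powr_le)
  then have geometric: "(2 powr p * \<theta>) ^ j * B \<le> B * (1/2) ^ j"
    using B(2) by (subst mult.commute, intro mult_left_mono power_mono) (simp_all add: \<theta>_def)
  have "ennreal ((2 powr p) ^ j) * Lp_pow M p ((pi_p \<pi>0 t ^^ j) \<beta>) \<le> ennreal ((2 powr p) ^ j) * ennreal (\<theta> ^ j * B)"
    by (rule mult_left_mono[OF small]) simp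
  also have "\<dots> = ennreal ((2 powr p * \<theta>) ^ j * B)"
    using B(2) by (simp add: \<theta>_def ennreal_mult power_mult_distrib mult.assoc)
  also have "\<dots> \<le> ennreal (B * (1/2) ^ j)" by (rule ennreal_leI[OF geometric])
  finally show ?thesis .
qed

lemma coboundary_equation_solvable:
  assumes op: "Lp_opnorm M p (pi_p \<pi>0 t) \<le> ennreal (1/4)" and \<beta>: "memLp M p \<beta>"
  shows "\<exists>f. memLp M p f \<and> (AE x in M. f x - pi_p \<pi>0 t f x = \<beta> x)"
proof -
  define d where "d j = (pi_p \<pi>0 t ^^ j) \<beta>" for j
  have d_Suc: "d (Suc j) = pi_p \<pi>0 t (d j)" for j by (simp add: d_def)
  have "memLp M p (d j)" for j
    by (induction j) (simp_all add: d_def \<beta> memLp_pi_p)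
  then have d: "d j \<in> borel_measurable M" for j by (simp add: memLp_iff_Lp_pow)
  obtain B where B: "Lp_pow M p \<beta> = ennreal B" "B \<ge> 0"
    using \<beta> by (cases "Lp_pow M p \<beta>" rule: ennreal_cases) (auto simp: memLp_iff_Lp_pow)
  have "ennreal ((2 powr p) ^ j) * Lp_pow M p (d j) \<le> ennreal (B * (1/2) ^ j)" for j
    unfolding d_def by (rule Lp_pow_pi_p_iterate_decay[OF op \<beta> B])
  note series = Lp_series_if_geometric_decay[OF p_pos d this B(2)]
  note summable = series(1) and f = series(2)
  have "AE x in M. (\<Sum>j. d j x) - pi_p \<pi>0 t (\<lambda>x. \<Sum>j. d j x) x = \<beta> x"
    using summable AE_right_translate[OF summable, of t]
  proof eventually_elim
    case (elim x)
    interpret \<pi>0_t: bounded_linear "blinfun_apply (\<pi>0 t)" by (rule blinfun.bounded_linear_right)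
    have "pi_p \<pi>0 t (\<lambda>x. \<Sum>j. d j x) x = (\<Sum>j. \<pi>0 t (d j (x + t)))"
      unfolding pi_p_def by (rule \<pi>0_t.suminf[OF summable_norm_cancel[OF elim(2)]])
    also have "\<dots> = (\<Sum>j. d (Suc j) x)" by (simp add: d_Suc pi_p_def)
    also have "\<dots> = (\<Sum>j. d j x) - d 0 x" by (rule suminf_split_head[OF summable_norm_cancel[OF elim(1)]])
    finally show ?case by (simp add: d_def)
  qed
  then show ?thesis using f by blast
qed

lemma Lp_pow_le_Lp_pow_coboundary:
  assumes op: "Lp_opnorm M p (pi_p \<pi>0 t) \<le> ennreal (1/4)" and e: "memLp M p e"
  shows "Lp_pow M p e \<le> ennreal 2 * (ennreal (2 powr p) * Lp_pow M p (\<lambda>x. e x - pi_p \<pi>0 t e x))"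
proof -
  let ?P = "ennreal (2 powr p)" and ?\<delta> = "Lp_pow M p (\<lambda>x. e x - pi_p \<pi>0 t e x)"
  have e_meas: "e \<in> borel_measurable M" and "Lp_pow M p e < \<infinity>"
    using e by (simp_all add: memLp_iff_Lp_pow)
  have Te: "pi_p \<pi>0 t e \<in> borel_measurable M" by (rule borel_measurable_pi_p[OF e_meas])
  have "Lp_pow M p e = Lp_pow M p (\<lambda>x. (e x - pi_p \<pi>0 t e x) + pi_p \<pi>0 t e x)" by simp
  also have "\<dots> \<le> ?P * (?\<delta> + Lp_pow M p (pi_p \<pi>0 t e))"
    using e_meas Te by (intro Lp_pow_add_le p_pos) measurable
  also have "\<dots> \<le> ?P * (?\<delta> + ennreal ((1/4) powr p) * Lp_pow M p e)"
    by (intro mult_left_mono add_mono order_refl Lp_pow_pi_p_le_Lp_opnorm[OF op _ e]) simp_all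
  also have "\<dots> = ?P * ?\<delta> + ennreal (2 powr p * (1/4) powr p) * Lp_pow M p e"
    by (simp add: distrib_left ennreal_mult mult.assoc)
  also have "\<dots> \<le> ?P * ?\<delta> + ennreal (1/2) * Lp_pow M p e"
    by (intro add_mono mult_right_mono ennreal_leI two_powr_mult_quarter_powr_le) simp_all
  finally have "Lp_pow M p e \<le> ennreal (1 / (1 - 1/2)) * (?P * ?\<delta>)"
    by (rule ennreal_le_absorb) (use \<open>Lp_pow M p e < \<infinity>\<close> in simp_all)
  then show ?thesis by simp
qed

lemma Lp_pow_coboundary_bounded:
  "\<exists>C<\<infinity>. \<forall>h. h \<in> borel_measurable M \<longrightarrow>
      Lp_pow M p (\<lambda>x. h x - pi_p \<pi>0 g h x) \<le> C * Lp_pow M p h"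
proof -
  obtain C where C: "C < \<infinity>"
    "\<And>h. h \<in> borel_measurable M \<Longrightarrow> Lp_pow M p (pi_p \<pi>0 g h) \<le> C * Lp_pow M p h"
    using Lp_pow_pi_p_le[of g] by blast
  show ?thesis
  proof (intro exI conjI allI impI)
    show "ennreal (2 powr p) * (1 + C) < \<infinity>" using C(1) by (simp add: ennreal_mult_less_top)
    fix h :: "'g \<Rightarrow> 'v" assume h: "h \<in> borel_measurable M"
    have "Lp_pow M p (\<lambda>x. h x - pi_p \<pi>0 g h x) \<le> ennreal (2 powr p) * (Lp_pow M p h + Lp_pow M p (pi_p \<pi>0 g h))"
      by (rule Lp_pow_diff_le[OF h borel_measurable_pi_p[OF h] p_pos])
    also have "\<dots> \<le> ennreal (2 powr p) * (Lp_pow M p h + C * Lp_pow M p h)"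
      by (intro mult_left_mono add_mono order_refl C(2) h) simp
    finally show "Lp_pow M p (\<lambda>x. h x - pi_p \<pi>0 g h x) \<le> ennreal (2 powr p) * (1 + C) * Lp_pow M p h"
      by (simp add: distrib_right mult.assoc)
  qed
qed

lemma in_closure_B1_Lp_pow:
  assumes closure: "in_closure_B1 M p \<pi>0 b" and b: "\<And>g. memLp M p (b g)"
    and K: "compact K" and \<epsilon>: "\<epsilon> > 0"
  shows "\<exists>u. memLp M p u \<and> (\<forall>g\<in>K. Lp_pow M p (\<lambda>x. b g x - (u x - pi_p \<pi>0 g u x)) \<le> ennreal \<epsilon>)"
proof -
  have "\<exists>u. memLp M p u \<and> (\<forall>g\<in>K. Lp_norm M p (\<lambda>x. b g x - (u x - pi_p \<pi>0 g u x)) < \<epsilon> powr (1/p))"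
    using closure K \<epsilon> unfolding in_closure_B1_def by simp
  then obtain u where u: "memLp M p u"
    and close: "\<And>g. g \<in> K \<Longrightarrow> Lp_norm M p (\<lambda>x. b g x - (u x - pi_p \<pi>0 g u x)) < \<epsilon> powr (1/p)"
    by blast
  have "Lp_pow M p (\<lambda>x. b g x - (u x - pi_p \<pi>0 g u x)) \<le> ennreal \<epsilon>" if "g \<in> K" for g
  proof -
    have "memLp M p (\<lambda>x. b g x - (u x - pi_p \<pi>0 g u x))"
      by (intro memLp_diff b u memLp_pi_p p_pos)
    from Lp_pow_le_if_Lp_norm_less[OF this p_pos close[OF that]]
    show ?thesis using \<epsilon> p_pos by (simp add: powr_powr)
  qed
  then show ?thesis using u by blast
qed

lemma Lp_pow_coboundary_defect_le:
  fixes \<epsilon> :: real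
  defines "P \<equiv> ennreal (2 powr p)"
  assumes op: "Lp_opnorm M p (pi_p \<pi>0 t) \<le> ennreal (1/4)"
    and b: "\<And>g. memLp M p (b g)"
    and f: "memLp M p f" and f_t: "AE x in M. f x - pi_p \<pi>0 t f x = b t x"
    and C: "\<And>h. h \<in> borel_measurable M \<Longrightarrow> Lp_pow M p (\<lambda>x. h x - pi_p \<pi>0 g h x) \<le> C * Lp_pow M p h"
    and u: "memLp M p u"
    and u_close: "\<And>h. h \<in> {g, t} \<Longrightarrow> Lp_pow M p (\<lambda>x. b h x - (u x - pi_p \<pi>0 h u x)) \<le> ennreal \<epsilon>"
  shows "Lp_pow M p (\<lambda>x. b g x - (f x - pi_p \<pi>0 g f x)) \<le> P * (1 + C * (2 * P)) * ennreal \<epsilon>"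
proof -
  define e where "e x = u x - f x" for x
  have e: "memLp M p e" unfolding e_def by (intro memLp_diff u f p_pos)
  have "AE x in M. e x - pi_p \<pi>0 t e x = (u x - pi_p \<pi>0 t u x) - b t x"
    using f_t by eventually_elim (simp add: e_def[abs_def] pi_p_diff, metis minus_diff_eq)
  then have "Lp_pow M p (\<lambda>x. e x - pi_p \<pi>0 t e x) = Lp_pow M p (\<lambda>x. b t x - (u x - pi_p \<pi>0 t u x))"
    by (simp add: Lp_pow_cong_AE Lp_pow_diff_commute)
  also have "\<dots> \<le> ennreal \<epsilon>" by (rule u_close) simp
  finally have defect: "Lp_pow M p (\<lambda>x. e x - pi_p \<pi>0 t e x) \<le> ennreal \<epsilon>" .
  have "Lp_pow M p e \<le> 2 * (P * Lp_pow M p (\<lambda>x. e x - pi_p \<pi>0 t e x))"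
    using Lp_pow_le_Lp_pow_coboundary[OF op e] by (simp add: P_def)
  also have "\<dots> \<le> 2 * (P * ennreal \<epsilon>)" by (intro mult_left_mono defect) simp_all
  finally have e_small: "Lp_pow M p e \<le> 2 * (P * ennreal \<epsilon>)" .
  have split: "(\<lambda>x. b g x - (f x - pi_p \<pi>0 g f x))
      = (\<lambda>x. (b g x - (u x - pi_p \<pi>0 g u x)) + (e x - pi_p \<pi>0 g e x))"
    by (simp add: fun_eq_iff e_def[abs_def] pi_p_diff algebra_simps)
  have "memLp M p (\<lambda>x. b g x - (u x - pi_p \<pi>0 g u x))" "memLp M p (\<lambda>x. e x - pi_p \<pi>0 g e x)"
    by (intro memLp_diff b u e memLp_pi_p p_pos)+
  then have "Lp_pow M p (\<lambda>x. b g x - (f x - pi_p \<pi>0 g f x))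
      \<le> P * (Lp_pow M p (\<lambda>x. b g x - (u x - pi_p \<pi>0 g u x)) + Lp_pow M p (\<lambda>x. e x - pi_p \<pi>0 g e x))"
    unfolding split P_def by (intro Lp_pow_add_le p_pos) (simp_all add: memLp_iff_Lp_pow)
  also have "\<dots> \<le> P * (ennreal \<epsilon> + C * (2 * (P * ennreal \<epsilon>)))"
    using e by (intro mult_left_mono add_mono u_close order_trans[OF C mult_left_mono[OF e_small]])
      (auto simp: memLp_iff_Lp_pow)
  finally show ?thesis by (simp add: algebra_simps)
qed

lemma coboundary_if_in_closure_B1:
  assumes op: "Lp_opnorm M p (pi_p \<pi>0 t) \<le> ennreal (1/4)"
    and b: "\<And>g. memLp M p (b g)" and closure: "in_closure_B1 M p \<pi>0 b"
  shows "coboundary M p \<pi>0 b"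
proof -
  obtain f where f: "memLp M p f" and f_t: "AE x in M. f x - pi_p \<pi>0 t f x = b t x"
    using coboundary_equation_solvable[OF op b] by blast
  have "AE x in M. b g x = f x - pi_p \<pi>0 g f x" for g
  proof -
    define c where "c x = b g x - (f x - pi_p \<pi>0 g f x)" for x
    obtain C where C: "C < \<infinity>"
      "\<And>h. h \<in> borel_measurable M \<Longrightarrow> Lp_pow M p (\<lambda>x. h x - pi_p \<pi>0 g h x) \<le> C * Lp_pow M p h"
      using Lp_pow_coboundary_bounded[of g] by blast
    let ?K = "ennreal (2 powr p) * (1 + C * (2 * ennreal (2 powr p)))"
    have "Lp_pow M p c \<le> ?K * ennreal \<epsilon>" if \<epsilon>: "\<epsilon> > 0" for \<epsilon>
    proof -
      obtain u where "memLp M p u"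
        "\<And>h. h \<in> {g, t} \<Longrightarrow> Lp_pow M p (\<lambda>x. b h x - (u x - pi_p \<pi>0 h u x)) \<le> ennreal \<epsilon>"
        using in_closure_B1_Lp_pow[OF closure b _ \<epsilon>, of "{g, t}"] by auto
      from Lp_pow_coboundary_defect_le[OF op b f f_t C(2) this] show ?thesis
        by (simp add: c_def[abs_def])
    qed
    moreover have "?K < \<infinity>" using C(1) by (simp add: ennreal_mult_less_top)
    ultimately have "Lp_pow M p c = 0" by (intro ennreal_eq_0_if_le_epsilon[of ?K]) auto
    moreover have "memLp M p c" unfolding c_def by (intro memLp_diff b f memLp_pi_p p_pos)
    ultimately have "AE x in M. c x = 0"
      by (intro AE_eq_0_if_Lp_pow_eq_0[OF _ p_pos]) (simp_all add: memLp_iff_Lp_pow)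
    then show ?thesis by eventually_elim (simp add: c_def)
  qed
  then show ?thesis using f unfolding coboundary_def by blast
qed

end

theorem lemma2:
  fixes M :: "'g::{topological_group_add, t2_space, second_countable_topology} measure"
    and \<pi>0 :: "'g \<Rightarrow> ('v::{banach, second_countable_topology} \<Rightarrow>\<^sub>L 'v)"
    and p :: real
  assumes "locally_compact_space (euclidean :: 'g topology)"
    and "left_haar_measure M"
    and "continuous_rep \<pi>0"
    and "p > 1"
    and "\<exists>\<xi>. pi_p_contracting M p \<pi>0 \<xi>"
  shows "\<forall>b. cocycle M p \<pi>0 b \<and> in_closure_B1 M p \<pi>0 b \<longrightarrow> coboundary M p \<pi>0 b"
proof (intro allI impI)
  fix b assume b: "cocycle M p \<pi>0 b \<and> in_closure_B1 M p \<pi>0 b"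
  interpret haar_Lp M \<pi>0 p
    by (intro haar_Lp.intro lc_haar.intro haar_Lp_axioms.intro assms(1,2,4))
  obtain \<xi> where "(\<lambda>n. Lp_opnorm M p (pi_p \<pi>0 (gpow \<xi> n))) \<longlonglongrightarrow> 0"
    using assms(5) unfolding pi_p_contracting_def by blast
  then have "eventually (\<lambda>n. Lp_opnorm M p (pi_p \<pi>0 (gpow \<xi> n)) < ennreal (1/4)) sequentially"
    by (rule order_tendstoD(2)) simp
  then obtain N where "\<forall>n\<ge>N. Lp_opnorm M p (pi_p \<pi>0 (gpow \<xi> n)) < ennreal (1/4)"
    by (auto simp: eventually_sequentially)
  then have "Lp_opnorm M p (pi_p \<pi>0 (gpow \<xi> N)) \<le> ennreal (1/4)" by (simp add: less_imp_le)
  then show "coboundary M p \<pi>0 b"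
    using coboundary_if_in_closure_B1 b by (auto simp: cocycle_def)
qed

end
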